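(* Let $(P,\leqslant)$ be a conditionally-complete poset and let $P^* := \{x \in P : \exists\, y \in P,\ y \ll x\}$, ordered by the restriction of $\leqslant$. Then for every directed subset $D$ of $P^*$ that is bounded above, the supremum of $D$ in $P^*$ exists and equals the supremum $\bigvee D$ of $D$ in $P$.
   Context: A poset is conditionally-complete if every nonempty subset bounded above has a supremum. A nonempty subset $D$ is directed if any two elements of $D$ have an upper bound in $D$. For $x,y \in P$, $x \ll y$ ($x$ way-below $y$) means: for every directed subset $D$ of $P$ bounded above with supremum $d_0$, $y \leqslant d_0$ implies $x \leqslant d$ for some $d \in D$. *)

theory Defs
  imports Main
begin

definition is_sup_on :: "'a::order set \<Rightarrow> 'a set \<Rightarrow> 'a \<Rightarrow> bool" where
  "is_sup_on S A s \<longleftrightarrow> s \<in> S \<and> (\<forall>a\<in>A. a \<le> s) \<and> (\<forall>u\<in>S. (\<forall>a\<in>A. a \<le> u) \<longrightarrow> s \<le> u)"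

definition cond_complete_poset :: "'a::order itself \<Rightarrow> bool" where
  "cond_complete_poset _ \<longleftrightarrow>
     (\<forall>A::'a set. A \<noteq> {} \<and> (\<exists>u. \<forall>a\<in>A. a \<le> u) \<longrightarrow> (\<exists>s. is_sup_on UNIV A s))"

definition directed :: "'a::order set \<Rightarrow> bool" where
  "directed D \<longleftrightarrow> D \<noteq> {} \<and> (\<forall>x\<in>D. \<forall>y\<in>D. \<exists>z\<in>D. x \<le> z \<and> y \<le> z)"

definition way_below :: "'a::order \<Rightarrow> 'a \<Rightarrow> bool" (infix "\<lless>" 50) where
  "x \<lless> y \<longleftrightarrow> (\<forall>D. directed D \<and> (\<exists>u. \<forall>d\<in>D. d \<le> u) \<longrightarrow>
      (\<forall>d0. is_sup_on UNIV D d0 \<and> y \<le> d0 \<longrightarrow> (\<exists>d\<in>D. x \<le> d)))"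

definition Pstar :: "'a::order set" where
  "Pstar = {x. \<exists>y. y \<lless> x}"

end

theory Submission
  imports Defs
begin

text \<open>The supremum of D in P already lies in P*: it dominates some element of D, which lies in P*,
  and P* is an up-set because way-below is monotone in its right argument.\<close>

lemma way_below_mono_right: "x \<lless> y \<Longrightarrow> y \<le> z \<Longrightarrow> x \<lless> z"
  unfolding way_below_def by (meson order_trans)

lemma Pstar_upward_closed: "y \<in> Pstar \<Longrightarrow> y \<le> z \<Longrightarrow> z \<in> Pstar"
  unfolding Pstar_def by (blast intro: way_below_mono_right)

lemma is_sup_on_subset:
  "is_sup_on S A s \<Longrightarrow> T \<subseteq> S \<Longrightarrow> s \<in> T \<Longrightarrow> is_sup_on T A s"
  unfolding is_sup_on_def by blast

lemma directed_has_sup: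
  fixes D :: "'a::order set"
  assumes "cond_complete_poset TYPE('a)" and "directed D" and "\<forall>d\<in>D. d \<le> u"
  obtains s where "is_sup_on UNIV D s"
proof -
  have "D \<noteq> {}"
    using assms(2) unfolding directed_def by blast
  with assms(1,3) show thesis
    using that unfolding cond_complete_poset_def by blast
qed

theorem corollary2p2:
  fixes D :: "'a::order set"
  assumes "cond_complete_poset TYPE('a)"
    and "directed D" and "D \<subseteq> Pstar"
    and "\<exists>u\<in>Pstar. \<forall>d\<in>D. d \<le> u"
  shows "\<exists>s. is_sup_on UNIV D s \<and> is_sup_on Pstar D s"
proof -
  obtain s where s: "is_sup_on UNIV D s"
    using assms(1,2,4) directed_has_sup by blast
  obtain d where "d \<in> D"
    using assms(2) unfolding directed_def by blast
  moreover have "d \<le> s"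
    using s \<open>d \<in> D\<close> unfolding is_sup_on_def by blast
  ultimately have "s \<in> Pstar"
    using assms(3) Pstar_upward_closed by blast
  with s show ?thesis
    by (blast intro: is_sup_on_subset)
qed

end
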